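(* In the general setting described in the context, let $\mathcal X=\{x_{n,k}\}$ be a Marcinkiewicz–Zygmund family for $M$ with weights $\tau_{n,k}$, constants $A,B$, and condition number $\kappa=B/A$. Let $\sigma>\sigma_{\mathrm{crit}}$, $f\in H^\sigma(M)$, and for $n\in\mathbb N$ let $p_n=\operatorname{argmin}_{p\in\mathcal P_n}\sum_{k=1}^{L_n}|f(x_{n,k})-p(x_{n,k})|^2\tau_{n,k}$. Then $$\|f-p_n\|_2\le\sqrt{1+\kappa^2}\,\|f\|_{H^\sigma}\,\phi_\sigma(n).$$
   Context: $M$ is a compact space, $\mu$ a probability measure on $M$, $\langle f,g\rangle=\int_Mf\bar g\,d\mu$, $\|\cdot\|_2$ the $L^2(M,\mu)$-norm. $\{\phi_k:k\in\mathbb N\}$ is an orthonormal basis of $L^2(M,\mu)$ of continuous functions with $\phi_1\equiv1$; $\hat f(k)=\langle f,\phi_k\rangle$. $(\lambda_k)$ is non-decreasing, $\lambda_k\ge0$, $\lambda_k\to\infty$. $H^\sigma(M)=\{f:\|f\|_{H^\sigma}^2=\sum_k|\hat f(k)|^2(1+\lambda_k^2)^\sigma<\infty\}$. $\mathcal P_n=\operatorname{span}\{\phi_k:\lambda_k\le n\}$. There is $\sigma_{\mathrm{crit}}$ such that $C_\sigma^2=\sup_{x\in M}\sum_k|\phi_k(x)|^2(1+\lambda_k^2)^{-\sigma}<\infty$ for all $\sigma>\sigma_{\mathrm{crit}}$ (so $H^\sigma(M)\subseteq C(M)$ for such $\sigma$). $\phi_\sigma(n)=\sup_{x\in M}\big(\sum_{k:\lambda_k>n}|\phi_k(x)|^2(1+\lambda_k^2)^{-\sigma}\big)^{1/2}$.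 A Marcinkiewicz–Zygmund family is $\{x_{n,k}:n\in\mathbb N,k=1,\dots,L_n\}\subseteq M$ with weights $\tau_{n,k}>0$ and constants $A,B>0$ independent of $n$ such that $A\|p\|_2^2\le\sum_{k=1}^{L_n}|p(x_{n,k})|^2\tau_{n,k}\le B\|p\|_2^2$ for all $p\in\mathcal P_n$. *)

theory Defs
  imports "HOL-Probability.Probability"
begin

text \<open>Functions are complex valued on the carrier M = space mu.\<close>

definition l2inner :: "'a measure \<Rightarrow> ('a \<Rightarrow> complex) \<Rightarrow> ('a \<Rightarrow> complex) \<Rightarrow> complex" where
  "l2inner mu f g = (LINT x|mu. f x * cnj (g x))"

definition l2norm :: "'a measure \<Rightarrow> ('a \<Rightarrow> complex) \<Rightarrow> real" where
  "l2norm mu f = sqrt (LINT x|mu. (cmod (f x))\<^sup>2)"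

definition in_L2 :: "'a measure \<Rightarrow> ('a \<Rightarrow> complex) \<Rightarrow> bool" where
  "in_L2 mu f \<longleftrightarrow> f \<in> borel_measurable mu \<and> integrable mu (\<lambda>x. (cmod (f x))\<^sup>2)"

definition is_ONB :: "'a measure \<Rightarrow> (nat \<Rightarrow> 'a \<Rightarrow> complex) \<Rightarrow> bool" where
  "is_ONB mu phi \<longleftrightarrow>
     (\<forall>k. in_L2 mu (phi k)) \<and>
     (\<forall>j k. l2inner mu (phi j) (phi k) = (if j = k then 1 else 0)) \<and>
     (\<forall>g. in_L2 mu g \<and> (\<forall>k. l2inner mu g (phi k) = 0) \<longrightarrow> (AE x in mu. g x = 0))"

definition fcoef :: "'a measure \<Rightarrow> (nat \<Rightarrow> 'a \<Rightarrow> complex) \<Rightarrow> ('a \<Rightarrow> complex) \<Rightarrow> nat \<Rightarrow> complex" where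
  "fcoef mu phi f k = l2inner mu f (phi k)"

definition hs_norm :: "'a measure \<Rightarrow> (nat \<Rightarrow> 'a \<Rightarrow> complex) \<Rightarrow> (nat \<Rightarrow> real) \<Rightarrow> real \<Rightarrow> ('a \<Rightarrow> complex) \<Rightarrow> real" where
  "hs_norm mu phi lam s f =
     sqrt (\<Sum>k. (cmod (fcoef mu phi f k))\<^sup>2 * (1 + (lam k)\<^sup>2) powr s)"

definition in_Hs :: "'a measure \<Rightarrow> (nat \<Rightarrow> 'a \<Rightarrow> complex) \<Rightarrow> (nat \<Rightarrow> real) \<Rightarrow> real \<Rightarrow> ('a \<Rightarrow> complex) \<Rightarrow> bool" where
  "in_Hs mu phi lam s f \<longleftrightarrow>
     in_L2 mu f \<and> summable (\<lambda>k. (cmod (fcoef mu phi f k))\<^sup>2 * (1 + (lam k)\<^sup>2) powr s)"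

definition Pn :: "(nat \<Rightarrow> 'a \<Rightarrow> complex) \<Rightarrow> (nat \<Rightarrow> real) \<Rightarrow> nat \<Rightarrow> ('a \<Rightarrow> complex) set" where
  "Pn phi lam n = {(\<lambda>x. \<Sum>k\<in>{k. lam k \<le> real n}. c k * phi k x) | c :: nat \<Rightarrow> complex. True}"

definition Csigma_finite :: "'a measure \<Rightarrow> (nat \<Rightarrow> 'a \<Rightarrow> complex) \<Rightarrow> (nat \<Rightarrow> real) \<Rightarrow> real \<Rightarrow> bool" where
  "Csigma_finite mu phi lam s \<longleftrightarrow>
     (\<exists>C. \<forall>x\<in>space mu. summable (\<lambda>k. (cmod (phi k x))\<^sup>2 * (1 + (lam k)\<^sup>2) powr (- s)) \<and>
                        (\<Sum>k. (cmod (phi k x))\<^sup>2 * (1 + (lam k)\<^sup>2) powr (- s)) \<le> C)"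

definition phi_sigma :: "'a measure \<Rightarrow> (nat \<Rightarrow> 'a \<Rightarrow> complex) \<Rightarrow> (nat \<Rightarrow> real) \<Rightarrow> real \<Rightarrow> nat \<Rightarrow> real" where
  "phi_sigma mu phi lam s n =
     (SUP x\<in>space mu. sqrt (\<Sum>k. if lam k > real n then (cmod (phi k x))\<^sup>2 * (1 + (lam k)\<^sup>2) powr (- s) else 0))"

definition MZ_family :: "'a measure \<Rightarrow> (nat \<Rightarrow> 'a \<Rightarrow> complex) \<Rightarrow> (nat \<Rightarrow> real) \<Rightarrow>
    (nat \<Rightarrow> nat \<Rightarrow> 'a) \<Rightarrow> (nat \<Rightarrow> nat \<Rightarrow> real) \<Rightarrow> (nat \<Rightarrow> nat) \<Rightarrow> real \<Rightarrow> real \<Rightarrow> bool" where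
  "MZ_family mu phi lam X tau L A B \<longleftrightarrow>
     A > 0 \<and> B > 0 \<and>
     (\<forall>n. \<forall>k\<in>{1..L n}. X n k \<in> space mu \<and> tau n k > 0) \<and>
     (\<forall>n. \<forall>p\<in>Pn phi lam n.
        A * (l2norm mu p)\<^sup>2 \<le> (\<Sum>k=1..L n. (cmod (p (X n k)))\<^sup>2 * tau n k) \<and>
        (\<Sum>k=1..L n. (cmod (p (X n k)))\<^sup>2 * tau n k) \<le> B * (l2norm mu p)\<^sup>2)"

definition ls_error :: "(nat \<Rightarrow> nat \<Rightarrow> 'a) \<Rightarrow> (nat \<Rightarrow> nat \<Rightarrow> real) \<Rightarrow> (nat \<Rightarrow> nat) \<Rightarrow> nat \<Rightarrow>
    ('a \<Rightarrow> complex) \<Rightarrow> ('a \<Rightarrow> complex) \<Rightarrow> real" where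
  "ls_error X tau L n f p = (\<Sum>k=1..L n. (cmod (f (X n k) - p (X n k)))\<^sup>2 * tau n k)"

end

theory Submission
  imports Defs
begin

text \<open>Write \<open>f - p = g + w\<close>, where \<open>g = f - S\<^sub>n f\<close> is the remainder of the truncated
  expansion of \<open>f\<close> and \<open>w = S\<^sub>n f - p \<in> P\<^sub>n\<close>. Cauchy-Schwarz on the tail of the expansion, with
  weights \<open>(1 + \<lambda>\<^sub>k\<^sup>2) powr (\<plusminus>\<sigma>/2)\<close>, gives \<open>|g| \<le> \<parallel>f\<parallel>\<^sub>H\<^sub>\<sigma> \<phi>\<^sub>\<sigma>(n)\<close> pointwise, and \<open>g \<bottom> P\<^sub>n\<close>, so
  \<open>\<parallel>f - p\<parallel>\<^sup>2 = \<parallel>g\<parallel>\<^sup>2 + \<parallel>w\<parallel>\<^sup>2\<close>. Minimality of \<open>p\<close> makes \<open>f - p\<close> orthogonal to \<open>P\<^sub>n\<close> in the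
  discrete weighted inner product, so the discrete norm of \<open>w\<close> is at most that of \<open>g = f - p - w\<close>.
  The Marcinkiewicz-Zygmund inequalities for \<open>w\<close> and for the constant \<open>\<phi>\<^sub>1 = 1\<close> (\<open>phi 0\<close> here) turn this into
  \<open>A \<parallel>w\<parallel>\<^sup>2 \<le> B \<parallel>f\<parallel>\<^sub>H\<^sub>\<sigma>\<^sup>2 \<phi>\<^sub>\<sigma>(n)\<^sup>2\<close>, and \<open>B/A \<le> (B/A)\<^sup>2\<close> because \<open>A \<le> B\<close>.\<close>

lemma l2norm_sq: "(l2norm mu f)\<^sup>2 = (LINT x|mu. (cmod (f x))\<^sup>2)"
  unfolding l2norm_def by simp

lemma cmod_add_sq: "(cmod (u + w))\<^sup>2 = (cmod u)\<^sup>2 + 2 * Re (u * cnj w) + (cmod w)\<^sup>2"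
  by (simp only: cmod_power2) (simp add: power2_eq_square algebra_simps)

lemma in_L2_integrable_mult_cnj:
  assumes "in_L2 mu f" "in_L2 mu g"
  shows "integrable mu (\<lambda>x. f x * cnj (g x))"
proof (rule Bochner_Integration.integrable_bound)
  show "integrable mu (\<lambda>x. (cmod (f x))\<^sup>2 + (cmod (g x))\<^sup>2)"
    using assms unfolding in_L2_def by auto
  have "(\<lambda>x. cnj (g x)) \<in> borel_measurable mu"
    using assms unfolding in_L2_def
    by (intro borel_measurable_continuous_on[where f=cnj]) (auto intro: continuous_intros)
  then show "(\<lambda>x. f x * cnj (g x)) \<in> borel_measurable mu"
    using assms unfolding in_L2_def by auto
  have "cmod u * cmod v \<le> (cmod u)\<^sup>2 + (cmod v)\<^sup>2" for u v
    by (smt (verit) norm_ge_zero power2_eq_square mult_mono mult_nonneg_nonneg sum_squares_bound)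
  then show "AE x in mu. norm (f x * cnj (g x)) \<le> norm ((cmod (f x))\<^sup>2 + (cmod (g x))\<^sup>2)"
    by (simp add: norm_mult)
qed

lemma in_L2_add:
  assumes "in_L2 mu f" "in_L2 mu g"
  shows "in_L2 mu (\<lambda>x. f x + g x)"
  unfolding in_L2_def
proof
  show "(\<lambda>x. f x + g x) \<in> borel_measurable mu"
    using assms unfolding in_L2_def by auto
  have "integrable mu (\<lambda>x. (cmod (f x))\<^sup>2 + 2 * Re (f x * cnj (g x)) + (cmod (g x))\<^sup>2)"
    using assms integrable_mult_right[OF integrable_Re[OF in_L2_integrable_mult_cnj[OF assms]]]
    unfolding in_L2_def by (intro Bochner_Integration.integrable_add) blast+
  then show "integrable mu (\<lambda>x. (cmod (f x + g x))\<^sup>2)"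
    unfolding cmod_add_sq .
qed

lemma in_L2_mult_left:
  assumes "in_L2 mu f"
  shows "in_L2 mu (\<lambda>x. c * f x)"
  using assms unfolding in_L2_def by (auto simp: norm_mult power_mult_distrib)

lemma in_L2_diff:
  assumes "in_L2 mu f" "in_L2 mu g"
  shows "in_L2 mu (\<lambda>x. f x - g x)"
  using in_L2_add[OF assms(1) in_L2_mult_left[OF assms(2), of "-1"]] by simp

lemma in_L2_sum:
  assumes "\<And>k. k \<in> I \<Longrightarrow> in_L2 mu (f k)"
  shows "in_L2 mu (\<lambda>x. \<Sum>k\<in>I. f k x)"
  using assms
proof (induction I rule: infinite_finite_induct)
  case (insert a I)
  then show ?case using in_L2_add[of mu "f a" "\<lambda>x. \<Sum>k\<in>I. f k x"] by simp
qed (simp_all add: in_L2_def)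

lemma l2inner_diff_left:
  assumes "in_L2 mu f" "in_L2 mu g" "in_L2 mu h"
  shows "l2inner mu (\<lambda>x. f x - g x) h = l2inner mu f h - l2inner mu g h"
  unfolding l2inner_def left_diff_distrib
  using in_L2_integrable_mult_cnj[OF assms(1,3)] in_L2_integrable_mult_cnj[OF assms(2,3)]
  by (rule Bochner_Integration.integral_diff)

lemma l2inner_sum_left:
  assumes "\<And>j. j \<in> J \<Longrightarrow> in_L2 mu (f j)" "in_L2 mu h"
  shows "l2inner mu (\<lambda>x. \<Sum>j\<in>J. c j * f j x) h = (\<Sum>j\<in>J. c j * l2inner mu (f j) h)"
proof -
  have "l2inner mu (\<lambda>x. \<Sum>j\<in>J. c j * f j x) h = (LINT x|mu. (\<Sum>j\<in>J. c j * (f j x * cnj (h x))))"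
    unfolding l2inner_def by (simp add: sum_distrib_right mult.assoc)
  also have "\<dots> = (\<Sum>j\<in>J. c j * l2inner mu (f j) h)"
    unfolding l2inner_def using assms
    by (subst Bochner_Integration.integral_sum) (auto intro!: in_L2_integrable_mult_cnj)
  finally show ?thesis .
qed

lemma l2inner_sum_right:
  assumes "in_L2 mu g" "\<And>j. j \<in> J \<Longrightarrow> in_L2 mu (h j)"
  shows "l2inner mu g (\<lambda>x. \<Sum>j\<in>J. c j * h j x) = (\<Sum>j\<in>J. cnj (c j) * l2inner mu g (h j))"
proof -
  have "l2inner mu g (\<lambda>x. \<Sum>j\<in>J. c j * h j x) = (LINT x|mu. (\<Sum>j\<in>J. cnj (c j) * (g x * cnj (h j x))))"
    unfolding l2inner_def by (simp add: sum_distrib_left algebra_simps)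
  also have "\<dots> = (\<Sum>j\<in>J. cnj (c j) * l2inner mu g (h j))"
    unfolding l2inner_def using assms
    by (subst Bochner_Integration.integral_sum) (auto intro!: in_L2_integrable_mult_cnj)
  finally show ?thesis .
qed

lemma l2norm_add_sq_orthogonal:
  assumes "in_L2 mu f" "in_L2 mu g" "l2inner mu f g = 0"
  shows "(l2norm mu (\<lambda>x. f x + g x))\<^sup>2 = (l2norm mu f)\<^sup>2 + (l2norm mu g)\<^sup>2"
proof -
  have fg: "integrable mu (\<lambda>x. f x * cnj (g x))"
    using in_L2_integrable_mult_cnj[OF assms(1,2)] .
  have "(LINT x|mu. 2 * Re (f x * cnj (g x))) = 2 * Re (l2inner mu f g)"
    unfolding l2inner_def integral_mult_right_zero using integral_Re[OF fg] by (simp only:)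
  then have "(LINT x|mu. 2 * Re (f x * cnj (g x))) = 0"
    using assms(3) by simp
  moreover have "integrable mu (\<lambda>x. 2 * Re (f x * cnj (g x)))"
    using integrable_mult_right[OF integrable_Re[OF fg]] .
  ultimately show ?thesis
    using assms(1,2) unfolding l2norm_sq cmod_add_sq in_L2_def
    by (simp add: Bochner_Integration.integral_add Bochner_Integration.integrable_add)
qed

lemma (in prob_space) l2norm_sq_le_of_bounded:
  assumes "in_L2 M f" "\<And>x. x \<in> space M \<Longrightarrow> cmod (f x) \<le> E"
  shows "(l2norm M f)\<^sup>2 \<le> E\<^sup>2"
proof -
  have "(LINT x|M. (cmod (f x))\<^sup>2) \<le> (LINT x|M. E\<^sup>2)"
    using assms unfolding in_L2_def
    by (intro integral_mono) (auto intro: power_mono)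
  then show ?thesis
    unfolding l2norm_sq by (simp add: prob_space)
qed

lemma norm_sums_le_Cauchy_Schwarz:
  fixes a b :: "nat \<Rightarrow> 'a::real_normed_algebra"
  assumes "summable (\<lambda>k. (norm (a k))\<^sup>2)" "summable (\<lambda>k. (norm (b k))\<^sup>2)"
    and "(\<lambda>k. a k * b k) sums s"
  shows "norm s \<le> sqrt (\<Sum>k. (norm (a k))\<^sup>2) * sqrt (\<Sum>k. (norm (b k))\<^sup>2)"
proof -
  have partial_le: "norm (\<Sum>k<N. a k * b k) \<le> sqrt (\<Sum>k. (norm (a k))\<^sup>2) * sqrt (\<Sum>k. (norm (b k))\<^sup>2)"
    for N
  proof -
    have "norm (\<Sum>k<N. a k * b k) \<le> (\<Sum>k<N. \<bar>norm (a k)\<bar> * \<bar>norm (b k)\<bar>)"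
      using order_trans[OF norm_sum sum_mono[OF norm_mult_ineq]] by simp
    also have "\<dots> \<le> L2_set (\<lambda>k. norm (a k)) {..<N} * L2_set (\<lambda>k. norm (b k)) {..<N}"
      by (rule L2_set_mult_ineq)
    also have "\<dots> \<le> sqrt (\<Sum>k. (norm (a k))\<^sup>2) * sqrt (\<Sum>k. (norm (b k))\<^sup>2)"
      unfolding L2_set_def using assms(1,2)
      by (intro mult_mono real_sqrt_le_mono sum_le_suminf real_sqrt_ge_zero suminf_nonneg sum_nonneg) auto
    finally show ?thesis .
  qed
  have "(\<lambda>N. norm (\<Sum>k<N. a k * b k)) \<longlonglongrightarrow> norm s"
    using assms(3) unfolding sums_def by (rule tendsto_norm)
  then show ?thesis
    by (rule LIMSEQ_le_const2) (use partial_le in auto)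
qed

text \<open>Minimality along the segment forces \<open>Re (\<Sum>k\<in>K. u k * cnj (w k) * tau k) \<le> 0\<close>
  (let \<open>t \<rightarrow> 0\<close>); the claim is this inequality after expanding \<open>|u - w|\<^sup>2\<close>.\<close>
lemma weighted_sq_sum_le_of_minimal_residual:
  fixes u w :: "'i \<Rightarrow> complex" and tau :: "'i \<Rightarrow> real"
  assumes tau: "\<And>k. k \<in> K \<Longrightarrow> tau k \<ge> 0"
    and min: "\<And>t. 0 < t \<Longrightarrow> t \<le> 1 \<Longrightarrow>
      (\<Sum>k\<in>K. (cmod (u k))\<^sup>2 * tau k) \<le> (\<Sum>k\<in>K. (cmod (u k - of_real t * w k))\<^sup>2 * tau k)"
  shows "(\<Sum>k\<in>K. (cmod (w k))\<^sup>2 * tau k) \<le> (\<Sum>k\<in>K. (cmod (u k - w k))\<^sup>2 * tau k)"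
proof -
  define U where "U = (\<Sum>k\<in>K. (cmod (u k))\<^sup>2 * tau k)"
  define R where "R = (\<Sum>k\<in>K. Re (u k * cnj (w k)) * tau k)"
  define W where "W = (\<Sum>k\<in>K. (cmod (w k))\<^sup>2 * tau k)"
  have expand: "(\<Sum>k\<in>K. (cmod (u k - of_real t * w k))\<^sup>2 * tau k) = U - 2 * t * R + t\<^sup>2 * W" for t
  proof -
    have cmod_diff_sq: "(cmod (v - of_real t * z))\<^sup>2 = (cmod v)\<^sup>2 - 2 * t * Re (v * cnj z) + t\<^sup>2 * (cmod z)\<^sup>2"
      for v z by (simp only: cmod_power2) (simp add: power2_eq_square algebra_simps)
    show ?thesis
      unfolding U_def R_def W_def cmod_diff_sq
      by (simp add: sum_distrib_left sum_subtractf sum.distrib algebra_simps)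
  qed
  have W0: "W \<ge> 0"
    unfolding W_def using tau by (intro sum_nonneg mult_nonneg_nonneg) auto
  have R_le: "2 * R \<le> t * W" if "0 < t" "t \<le> 1" for t
  proof -
    have "t * (2 * R) \<le> t * (t * W)"
      using min[OF that] expand[of t] unfolding U_def by (simp add: power2_eq_square algebra_simps)
    then show ?thesis using that by simp
  qed
  have "R \<le> 0"
  proof (rule ccontr)
    assume "\<not> R \<le> 0"
    define t where "t = min 1 (R / (W + 1))"
    have "0 < t" "t \<le> 1"
      unfolding t_def using \<open>\<not> R \<le> 0\<close> W0 by auto
    have "t * W \<le> R / (W + 1) * W"
      unfolding t_def using W0 by (intro mult_right_mono) auto
    also have "\<dots> < R"
      using \<open>\<not> R \<le> 0\<close> W0 by (simp add: field_simps)
    finally show False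
      using R_le[OF \<open>0 < t\<close> \<open>t \<le> 1\<close>] \<open>\<not> R \<le> 0\<close> by simp
  qed
  moreover have "U \<ge> 0"
    unfolding U_def using tau by (intro sum_nonneg mult_nonneg_nonneg) auto
  ultimately show ?thesis
    using expand[of 1] unfolding W_def[symmetric] by simp
qed

lemma finite_sublevel_if_filterlim_at_top:
  fixes lam :: "nat \<Rightarrow> real"
  assumes "filterlim lam at_top sequentially"
  shows "finite {k. lam k \<le> c}"
proof -
  obtain N where "\<forall>k\<ge>N. lam k \<ge> c + 1"
    using assms unfolding filterlim_at_top eventually_sequentially by blast
  then have "{k. lam k \<le> c} \<subseteq> {..<N}"
    by (force simp: not_less[symmetric])
  then show ?thesis
    by (rule finite_subset) simp
qed

lemma Pn_add_mult:
  assumes "p \<in> Pn phi lam n" "q \<in> Pn phi lam n"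
  shows "(\<lambda>x. p x + c * q x) \<in> Pn phi lam n"
proof -
  obtain a b where "p = (\<lambda>x. \<Sum>k | lam k \<le> real n. a k * phi k x)"
    and "q = (\<lambda>x. \<Sum>k | lam k \<le> real n. b k * phi k x)"
    using assms unfolding Pn_def by blast
  then have "(\<lambda>x. p x + c * q x) = (\<lambda>x. \<Sum>k | lam k \<le> real n. (a k + c * b k) * phi k x)"
    by (simp add: sum_distrib_left sum.distrib[symmetric] algebra_simps)
  then show ?thesis
    unfolding Pn_def by (intro CollectI exI[where x="\<lambda>k. a k + c * b k"]) simp
qed

lemma Pn_diff:
  assumes "p \<in> Pn phi lam n" "q \<in> Pn phi lam n"
  shows "(\<lambda>x. p x - q x) \<in> Pn phi lam n"
  using Pn_add_mult[OF assms, of "-1"] by simp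

lemma phi_in_Pn:
  assumes "finite {k. lam k \<le> real n}" "lam k \<le> real n"
  shows "phi k \<in> Pn phi lam n"
proof -
  have "phi k = (\<lambda>x. \<Sum>j | lam j \<le> real n. (if j = k then 1 else 0) * phi j x)"
    using assms by (simp add: mult_delta_left sum.delta)
  then show ?thesis
    unfolding Pn_def by (intro CollectI exI[where x="\<lambda>j. if j = k then 1 else 0"]) simp
qed

lemma Pn_eq_zero_if_below_spectrum:
  assumes "mono lam" "real n < lam 0" "q \<in> Pn phi lam n"
  shows "q = (\<lambda>x. 0)"
proof -
  have "real n < lam k" for k
    using assms(1,2) by (meson le0 monoD less_le_trans)
  then have "{k. lam k \<le> real n} = {}"
    by (blast dest: leD)
  then show ?thesis
    using assms(3) unfolding Pn_def by auto
qed

definition fourier_proj :: "'a measure \<Rightarrow> (nat \<Rightarrow> 'a \<Rightarrow> complex) \<Rightarrow> (nat \<Rightarrow> real) \<Rightarrow> nat \<Rightarrow>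
    ('a \<Rightarrow> complex) \<Rightarrow> 'a \<Rightarrow> complex" where
  "fourier_proj mu phi lam n f x = (\<Sum>k | lam k \<le> real n. fcoef mu phi f k * phi k x)"

lemma fourier_proj_in_Pn: "fourier_proj mu phi lam n f \<in> Pn phi lam n"
  unfolding Pn_def fourier_proj_def by blast

locale orthonormal_expansion = prob_space mu
  for mu :: "'a measure" +
  fixes phi :: "nat \<Rightarrow> 'a \<Rightarrow> complex" and lam :: "nat \<Rightarrow> real"
  assumes onb: "is_ONB mu phi"
    and lam_tendsto_at_top: "filterlim lam at_top sequentially"
begin

lemma finite_Pn_index: "finite {k. lam k \<le> real n}"
  using lam_tendsto_at_top by (rule finite_sublevel_if_filterlim_at_top)

lemma phi_in_L2: "in_L2 mu (phi k)"
  using onb unfolding is_ONB_def by blast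

lemma l2inner_phi: "l2inner mu (phi j) (phi k) = (if j = k then 1 else 0)"
  using onb unfolding is_ONB_def by blast

lemma Pn_in_L2:
  assumes "q \<in> Pn phi lam n"
  shows "in_L2 mu q"
  using assms unfolding Pn_def by (auto intro!: in_L2_sum in_L2_mult_left phi_in_L2)

lemma fourier_proj_in_L2: "in_L2 mu (fourier_proj mu phi lam n f)"
  using fourier_proj_in_Pn by (rule Pn_in_L2)

lemma l2inner_expansion_phi:
  assumes "finite J"
  shows "l2inner mu (\<lambda>x. \<Sum>j\<in>J. c j * phi j x) (phi k) = (if k \<in> J then c k else 0)"
  using assms by (simp add: l2inner_sum_left phi_in_L2 l2inner_phi if_distrib sum.delta cong: if_cong)

lemma l2inner_remainder_phi:
  assumes "in_L2 mu f" "lam k \<le> real n"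
  shows "l2inner mu (\<lambda>x. f x - fourier_proj mu phi lam n f x) (phi k) = 0"
proof -
  have "l2inner mu (fourier_proj mu phi lam n f) (phi k) = fcoef mu phi f k"
    unfolding fourier_proj_def using assms(2) finite_Pn_index
    by (simp add: l2inner_expansion_phi)
  then show ?thesis
    using assms(1) fourier_proj_in_L2 phi_in_L2
    by (simp add: l2inner_diff_left fcoef_def)
qed

lemma l2inner_remainder_Pn:
  assumes "in_L2 mu f" "q \<in> Pn phi lam n"
  shows "l2inner mu (\<lambda>x. f x - fourier_proj mu phi lam n f x) q = 0"
proof -
  obtain c where q: "q = (\<lambda>x. \<Sum>k | lam k \<le> real n. c k * phi k x)"
    using assms(2) unfolding Pn_def by blast
  have "in_L2 mu (\<lambda>x. f x - fourier_proj mu phi lam n f x)"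
    using assms(1) fourier_proj_in_L2 by (rule in_L2_diff)
  then show ?thesis
    unfolding q using assms(1) by (simp add: l2inner_sum_right phi_in_L2 l2inner_remainder_phi)
qed

lemma l2norm_sq_split_fourier_proj:
  assumes "in_L2 mu f" "p \<in> Pn phi lam n"
  shows "(l2norm mu (\<lambda>x. f x - p x))\<^sup>2 = (l2norm mu (\<lambda>x. f x - fourier_proj mu phi lam n f x))\<^sup>2
    + (l2norm mu (\<lambda>x. fourier_proj mu phi lam n f x - p x))\<^sup>2"
proof -
  have "(\<lambda>x. fourier_proj mu phi lam n f x - p x) \<in> Pn phi lam n"
    using fourier_proj_in_Pn assms(2) by (rule Pn_diff)
  moreover have "in_L2 mu (\<lambda>x. f x - fourier_proj mu phi lam n f x)"
    using assms(1) fourier_proj_in_L2 by (rule in_L2_diff)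
  ultimately show ?thesis
    using l2norm_add_sq_orthogonal Pn_in_L2 l2inner_remainder_Pn[OF assms(1)] by fastforce
qed

end

lemma summable_phi_sigma_tail:
  assumes "Csigma_finite mu phi lam s" "x \<in> space mu"
  shows "summable (\<lambda>k. if lam k > real n then (cmod (phi k x))\<^sup>2 * (1 + (lam k)\<^sup>2) powr (- s) else 0)"
  using assms unfolding Csigma_finite_def
  by (auto intro: summable_comparison_test'[where N=0])

lemma sqrt_tail_le_phi_sigma:
  assumes "Csigma_finite mu phi lam s" "x \<in> space mu"
  shows "sqrt (\<Sum>k. if lam k > real n then (cmod (phi k x))\<^sup>2 * (1 + (lam k)\<^sup>2) powr (- s) else 0)
    \<le> phi_sigma mu phi lam s n"
proof -
  define T where "T y = (\<Sum>k. if lam k > real n then (cmod (phi k y))\<^sup>2 * (1 + (lam k)\<^sup>2) powr (- s) else 0)"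
    for y
  obtain C where C: "\<forall>y\<in>space mu. summable (\<lambda>k. (cmod (phi k y))\<^sup>2 * (1 + (lam k)\<^sup>2) powr (- s)) \<and>
      (\<Sum>k. (cmod (phi k y))\<^sup>2 * (1 + (lam k)\<^sup>2) powr (- s)) \<le> C"
    using assms(1) unfolding Csigma_finite_def by blast
  have "T y \<le> C" if "y \<in> space mu" for y
  proof -
    have "T y \<le> (\<Sum>k. (cmod (phi k y))\<^sup>2 * (1 + (lam k)\<^sup>2) powr (- s))"
      unfolding T_def using C that summable_phi_sigma_tail[OF assms(1) that]
      by (intro suminf_le) auto
    then show ?thesis
      using C that by (blast intro: order_trans)
  qed
  then have "bdd_above ((\<lambda>y. sqrt (T y)) ` space mu)"
    by (intro bdd_aboveI2[where M="sqrt C"]) simp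
  then show ?thesis
    unfolding phi_sigma_def T_def[symmetric] using assms(2) by (rule cSUP_upper2) simp
qed

lemma norm_remainder_le_hs_norm_phi_sigma:
  assumes Cs: "Csigma_finite mu phi lam s"
    and f: "in_Hs mu phi lam s f"
    and x: "x \<in> space mu"
    and expansion: "(\<lambda>k. fcoef mu phi f k * phi k x) sums f x"
    and fin: "finite {k. lam k \<le> real n}"
  shows "cmod (f x - fourier_proj mu phi lam n f x) \<le> hs_norm mu phi lam s f * phi_sigma mu phi lam s n"
proof -
  define c where "c = fcoef mu phi f"
  define rho where "rho k = 1 + (lam k)\<^sup>2" for k
  define a where "a k = c k * of_real (rho k powr (s / 2))" for k
  define b where "b k = (if lam k > real n then phi k x * of_real (rho k powr (- s / 2)) else 0)" for k
  have rho_pos: "rho k > 0" for k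
    unfolding rho_def by (simp add: add_pos_nonneg)
  have rho_powr_half_sq: "(rho k powr (t / 2))\<^sup>2 = rho k powr t" for k t
    by (simp add: power2_eq_square powr_add[symmetric])
  have "(\<lambda>k. c k * phi k x - (if k \<in> {k. lam k \<le> real n} then c k * phi k x else 0))
      sums (f x - fourier_proj mu phi lam n f x)"
    unfolding fourier_proj_def c_def
    by (intro sums_diff expansion sums_If_finite_set fin)
  moreover have "c k * phi k x - (if k \<in> {k. lam k \<le> real n} then c k * phi k x else 0) = a k * b k" for k
  proof -
    have "rho k powr (s / 2) * rho k powr (- s / 2) = 1"
      using rho_pos[of k] by (simp add: powr_add[symmetric])
    then show ?thesis
      unfolding a_def b_def by (auto simp: algebra_simps of_real_mult[symmetric])
  qed
  ultimately have "(\<lambda>k. a k * b k) sums (f x - fourier_proj mu phi lam n f x)"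
    by simp
  moreover have a_sq: "(norm (a k))\<^sup>2 = (cmod (c k))\<^sup>2 * rho k powr s" for k
    unfolding a_def by (simp add: norm_mult power_mult_distrib rho_powr_half_sq)
  moreover have b_sq: "(norm (b k))\<^sup>2 =
      (if lam k > real n then (cmod (phi k x))\<^sup>2 * (1 + (lam k)\<^sup>2) powr (- s) else 0)" for k
    unfolding b_def rho_def[symmetric]
    using rho_powr_half_sq[of k "- s"] by (simp add: norm_mult power_mult_distrib)
  moreover have "summable (\<lambda>k. (cmod (c k))\<^sup>2 * rho k powr s)"
    using f unfolding in_Hs_def c_def rho_def by blast
  ultimately have "cmod (f x - fourier_proj mu phi lam n f x) \<le> hs_norm mu phi lam s f *
      sqrt (\<Sum>k. if lam k > real n then (cmod (phi k x))\<^sup>2 * (1 + (lam k)\<^sup>2) powr (- s) else 0)"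
    using norm_sums_le_Cauchy_Schwarz[of a b] summable_phi_sigma_tail[OF Cs x]
    unfolding hs_norm_def c_def rho_def by simp
  also have "\<dots> \<le> hs_norm mu phi lam s f * phi_sigma mu phi lam s n"
    using f unfolding hs_norm_def in_Hs_def
    by (intro mult_left_mono sqrt_tail_le_phi_sigma Cs x real_sqrt_ge_zero suminf_nonneg) auto
  finally show ?thesis .
qed

lemma MZ_weight_sum_bounds:
  assumes MZ: "MZ_family mu phi lam X tau L A B"
    and "prob_space mu"
    and phi0: "\<forall>x\<in>space mu. phi 0 x = 1"
    and "finite {k. lam k \<le> real n}" "lam 0 \<le> real n"
  shows "A \<le> (\<Sum>k=1..L n. tau n k)" and "(\<Sum>k=1..L n. tau n k) \<le> B"
proof -
  have "l2norm mu (phi 0) = 1"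
  proof -
    have "(LINT x|mu. (cmod (phi 0 x))\<^sup>2) = (LINT x|mu. 1)"
      using phi0 by (intro Bochner_Integration.integral_cong) auto
    then show ?thesis
      unfolding l2norm_def using prob_space.prob_space[OF \<open>prob_space mu\<close>] by simp
  qed
  moreover have "(\<Sum>k=1..L n. (cmod (phi 0 (X n k)))\<^sup>2 * tau n k) = (\<Sum>k=1..L n. tau n k)"
    using MZ phi0 unfolding MZ_family_def by (intro sum.cong) auto
  moreover have "phi 0 \<in> Pn phi lam n"
    using assms(4,5) by (rule phi_in_Pn)
  ultimately show "A \<le> (\<Sum>k=1..L n. tau n k)" "(\<Sum>k=1..L n. tau n k) \<le> B"
    using MZ unfolding MZ_family_def by fastforce+
qed

lemma ls_error_minimizer_correction_le:
  assumes MZ: "MZ_family mu phi lam X tau L A B"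
    and p: "p \<in> Pn phi lam n"
    and p_min: "\<forall>q\<in>Pn phi lam n. ls_error X tau L n f p \<le> ls_error X tau L n f q"
    and w: "w \<in> Pn phi lam n"
  shows "(\<Sum>k=1..L n. (cmod (w (X n k)))\<^sup>2 * tau n k)
    \<le> (\<Sum>k=1..L n. (cmod (f (X n k) - p (X n k) - w (X n k)))\<^sup>2 * tau n k)"
proof (rule weighted_sq_sum_le_of_minimal_residual)
  show "tau n k \<ge> 0" if "k \<in> {1..L n}" for k
    using MZ that unfolding MZ_family_def by (auto intro: less_imp_le)
  fix t :: real
  have "ls_error X tau L n f p \<le> ls_error X tau L n f (\<lambda>x. p x + of_real t * w x)"
    using p_min Pn_add_mult[OF p w] by blast
  then show "(\<Sum>k=1..L n. (cmod (f (X n k) - p (X n k)))\<^sup>2 * tau n k)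
    \<le> (\<Sum>k=1..L n. (cmod (f (X n k) - p (X n k) - of_real t * w (X n k)))\<^sup>2 * tau n k)"
    unfolding ls_error_def by (simp add: diff_diff_eq)
qed

lemma MZ_least_squares_correction_le:
  assumes MZ: "MZ_family mu phi lam X tau L A B"
    and prob: "prob_space mu"
    and phi0: "\<forall>x\<in>space mu. phi 0 x = 1"
    and "mono lam" "finite {k. lam k \<le> real n}"
    and p: "p \<in> Pn phi lam n"
    and p_min: "\<forall>q\<in>Pn phi lam n. ls_error X tau L n f p \<le> ls_error X tau L n f q"
    and w: "w \<in> Pn phi lam n"
    and residual_le: "\<forall>x\<in>space mu. cmod (f x - p x - w x) \<le> E"
  shows "(l2norm mu w)\<^sup>2 \<le> (B / A)\<^sup>2 * E\<^sup>2"
proof (cases "lam 0 \<le> real n")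
  case True
  have AB: "A > 0" "B > 0"
    using MZ unfolding MZ_family_def by auto
  have nodes: "X n k \<in> space mu \<and> tau n k > 0" if "k \<in> {1..L n}" for k
    using MZ that unfolding MZ_family_def by blast
  note weights = MZ_weight_sum_bounds[OF MZ prob phi0 \<open>finite _\<close> True]
  have "A * (l2norm mu w)\<^sup>2 \<le> (\<Sum>k=1..L n. (cmod (w (X n k)))\<^sup>2 * tau n k)"
    using MZ w unfolding MZ_family_def by blast
  also have "\<dots> \<le> (\<Sum>k=1..L n. (cmod (f (X n k) - p (X n k) - w (X n k)))\<^sup>2 * tau n k)"
    using MZ p p_min w by (rule ls_error_minimizer_correction_le)
  also have "\<dots> \<le> (\<Sum>k=1..L n. E\<^sup>2 * tau n k)"
    using residual_le nodes by (intro sum_mono mult_right_mono power_mono) (auto intro: less_imp_le)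
  also have "\<dots> \<le> E\<^sup>2 * B"
    using weights(2) by (simp add: sum_distrib_left[symmetric] mult_left_mono)
  finally have "(l2norm mu w)\<^sup>2 \<le> B / A * E\<^sup>2"
    using AB by (simp add: field_simps)
  also have "\<dots> \<le> (B / A)\<^sup>2 * E\<^sup>2"
  proof -
    have "1 \<le> B / A"
      using weights AB by simp
    then have "B / A \<le> (B / A)\<^sup>2"
      using mult_right_mono[of 1 "B / A" "B / A"] by (simp add: power2_eq_square)
    then show ?thesis
      by (rule mult_right_mono) simp
  qed
  finally show ?thesis .
next
  case False
  then have "w = (\<lambda>x. 0)"
    using \<open>mono lam\<close> w by (intro Pn_eq_zero_if_below_spectrum) auto
  then show ?thesis
    by (simp add: l2norm_def)
qed

theorem theorem3p3:
  fixes mu :: "'a::topological_space measure"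
    and phi :: "nat \<Rightarrow> 'a \<Rightarrow> complex"
    and lam :: "nat \<Rightarrow> real"
    and sigma_crit sigma A B :: real
    and X :: "nat \<Rightarrow> nat \<Rightarrow> 'a" and tau :: "nat \<Rightarrow> nat \<Rightarrow> real" and L :: "nat \<Rightarrow> nat"
    and f p :: "'a \<Rightarrow> complex" and n :: nat
  assumes prob: "prob_space mu"
    and cpt: "compact (space mu)"
    and borel_sets: "sets mu = sets (restrict_space borel (space mu))"
    and phi_cont: "\<forall>k. continuous_on (space mu) (phi k)"
    and onb: "is_ONB mu phi"
    and phi0: "\<forall>x\<in>space mu. phi 0 x = 1"
    and lam_mono: "mono lam"
    and lam_nonneg: "\<forall>k. lam k \<ge> 0"
    and lam_lim: "filterlim lam at_top sequentially"
    and crit: "\<forall>s>sigma_crit. Csigma_finite mu phi lam s"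
    and sigma: "sigma > sigma_crit"
    and MZ: "MZ_family mu phi lam X tau L A B"
    and fHs: "in_Hs mu phi lam sigma f"
    and f_cont_rep: "\<forall>x\<in>space mu. (\<lambda>k. fcoef mu phi f k * phi k x) sums f x"
    and p_in: "p \<in> Pn phi lam n"
    and p_min: "\<forall>q\<in>Pn phi lam n. ls_error X tau L n f p \<le> ls_error X tau L n f q"
  shows "l2norm mu (\<lambda>x. f x - p x)
           \<le> sqrt (1 + (B / A)\<^sup>2) * hs_norm mu phi lam sigma f * phi_sigma mu phi lam sigma n"
proof -
  interpret orthonormal_expansion mu phi lam
    using prob onb lam_lim by (intro orthonormal_expansion.intro orthonormal_expansion_axioms.intro)
  define E where "E = hs_norm mu phi lam sigma f * phi_sigma mu phi lam sigma n"
  have fL2: "in_L2 mu f"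
    using fHs unfolding in_Hs_def by blast
  have remainder_le: "cmod (f x - fourier_proj mu phi lam n f x) \<le> E" if "x \<in> space mu" for x
    unfolding E_def using crit sigma fHs that f_cont_rep finite_Pn_index
    by (intro norm_remainder_le_hs_norm_phi_sigma) auto
  then have "E \<ge> 0"
    using not_empty by (meson ex_in_conv norm_ge_zero order_trans)
  have "(l2norm mu (\<lambda>x. f x - p x))\<^sup>2 \<le> E\<^sup>2 + (B / A)\<^sup>2 * E\<^sup>2"
    unfolding l2norm_sq_split_fourier_proj[OF fL2 p_in]
  proof (rule add_mono)
    show "(l2norm mu (\<lambda>x. f x - fourier_proj mu phi lam n f x))\<^sup>2 \<le> E\<^sup>2"
      using in_L2_diff[OF fL2 fourier_proj_in_L2] remainder_le by (rule l2norm_sq_le_of_bounded)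
    show "(l2norm mu (\<lambda>x. fourier_proj mu phi lam n f x - p x))\<^sup>2 \<le> (B / A)\<^sup>2 * E\<^sup>2"
      using remainder_le
      by (intro MZ_least_squares_correction_le[OF MZ prob phi0 lam_mono finite_Pn_index p_in p_min
          Pn_diff[OF fourier_proj_in_Pn p_in]]) simp
  qed
  then have "l2norm mu (\<lambda>x. f x - p x) \<le> sqrt ((1 + (B / A)\<^sup>2) * E\<^sup>2)"
    by (intro real_le_rsqrt) (simp add: distrib_right)
  also have "\<dots> = sqrt (1 + (B / A)\<^sup>2) * E"
    using \<open>E \<ge> 0\<close> by (simp add: real_sqrt_mult)
  finally show ?thesis
    unfolding E_def by (simp only: mult.assoc)
qed

end
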